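(* Consider the following second-order cone optimal control problem over time steps $k=0,\dots,K-1$ and EVs $n=1,\dots,N$: \begin{align*} \min\;& \sum_{n=1}^N\sum_{k=0}^{K-1} q_n\,(s_n(k+1)-1)^2 + r_n\,(i_n(k))^2\\ \text{s.t. }& T(k+1)=\tau T(k)+\gamma e(k)+\rho T_a(k),\\ & e(k)\ge (i_{\text{total}}(k))^2,\\ & s_n(k+1)=s_n(k)+\eta_n i_n(k),\\ & i_{\text{total}}(k)=i_d(k)+\sum_{n=1}^N i_n(k),\\ & T(k+1)\le T^{\max},\\ & s_n(k+1)\in[\hat s_n(k+1),1],\\ & i_n(k)\in[0,i_n^{\max}],\\ & T(0)=T_{\text{meas}},\quad s_n(0)=s_{\text{meas},n}. \end{align*} Take an optimal solution together with associated Lagrange multipliers: $\mu_T^{k+1}\ge 0$ for the constraint $T(k+1)\le T^{\max}$, and $\mu_e^k\ge 0$ for the constraint $e(k)\ge(i_{\text{total}}(k))^2$. Then $k+1$ is the last time instance for which the temperature limit $T(k+1)\le T^{\max}$ is strictly active if and only if $k$ is the largest integer for which the relaxed constraint $e(k)\ge (i_{\text{total}}(k))^2$ is tight.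
   Context: Parameters: - $\tau=e^{-b\Delta t}\in(0,1)$ with $b,\Delta t>0$, and $\rho=1-\tau$; - $\gamma>0$; - $T_a(k)$ is a given ambient temperature sequence; - $i_d(k)\ge0$ is a given background current; - $q_n>0$, $r_n\ge 0$, $\eta_n>0$ and $i_n^{\max}>0$ are EV parameters; - $\hat s_n(k+1)=\bar s_n$ if $k+1\ge\bar k_n$ and $0$ otherwise, where $\bar s_n\in[0,1]$ and $\bar k_n\in\{0,\dots,K\}$. Following the paper's convention, the temperature limit is "strictly active" at $k+1$ when its multiplier satisfies $\mu_T^{k+1}>0$. The relaxed constraint is "tight" at $k$ when its multiplier satisfies $\mu_e^k>0$, in which case $e(k)=(i_{\text{total}}(k))^2$. *)

theory Defs
  imports Complex_Main
begin

record evprob =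
  pK :: nat
  pN :: nat
  ptau :: real
  prho :: real
  pgam :: real
  pTa :: "nat \<Rightarrow> real"
  pid :: "nat \<Rightarrow> real"
  pq :: "nat \<Rightarrow> real"
  pr :: "nat \<Rightarrow> real"
  peta :: "nat \<Rightarrow> real"
  pimax :: "nat \<Rightarrow> real"
  pTmax :: real
  pTmeas :: real
  psmeas :: "nat \<Rightarrow> real"
  psbar :: "nat \<Rightarrow> real"
  pkbar :: "nat \<Rightarrow> nat"

text \<open>Decision variables: T(k), e(k), s_n(k) (written sv x n k), i_n(k) (iv x n k),
  i_total(k).\<close>
record evsol =
  Tv :: "nat \<Rightarrow> real"
  ev :: "nat \<Rightarrow> real"
  sv :: "nat \<Rightarrow> nat \<Rightarrow> real"
  iv :: "nat \<Rightarrow> nat \<Rightarrow> real"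
  itv :: "nat \<Rightarrow> real"

text \<open>Lagrange multipliers, one for each constraint. muT is indexed by the time
  instance k+1 of the constraint T(k+1) <= Tmax; muE k belongs to e(k) >= i_total(k)^2;
  all other multipliers are indexed by (n and) k of the constraint as written.\<close>
record evmult =
  lamT :: "nat \<Rightarrow> real"
  muE :: "nat \<Rightarrow> real"
  lamS :: "nat \<Rightarrow> nat \<Rightarrow> real"
  lamI :: "nat \<Rightarrow> real"
  muT :: "nat \<Rightarrow> real"
  muSlo :: "nat \<Rightarrow> nat \<Rightarrow> real"
  muShi :: "nat \<Rightarrow> nat \<Rightarrow> real"
  muIlo :: "nat \<Rightarrow> nat \<Rightarrow> real"
  muIhi :: "nat \<Rightarrow> nat \<Rightarrow> real"
  lamT0 :: real
  lamS0 :: "nat \<Rightarrow> real"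

definition shat :: "evprob \<Rightarrow> nat \<Rightarrow> nat \<Rightarrow> real" where
  "shat P n k = (if k \<ge> pkbar P n then psbar P n else 0)"

definition cost :: "evprob \<Rightarrow> evsol \<Rightarrow> real" where
  "cost P x = (\<Sum>n\<in>{1..pN P}. \<Sum>k<pK P.
      pq P n * (sv x n (k+1) - 1)^2 + pr P n * (iv x n k)^2)"

definition feasible :: "evprob \<Rightarrow> evsol \<Rightarrow> bool" where
  "feasible P x \<longleftrightarrow>
     (\<forall>k<pK P. Tv x (k+1) = ptau P * Tv x k + pgam P * ev x k + prho P * pTa P k) \<and>
     (\<forall>k<pK P. ev x k \<ge> (itv x k)^2) \<and>
     (\<forall>n\<in>{1..pN P}. \<forall>k<pK P. sv x n (k+1) = sv x n k + peta P n * iv x n k) \<and>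
     (\<forall>k<pK P. itv x k = pid P k + (\<Sum>n\<in>{1..pN P}. iv x n k)) \<and>
     (\<forall>k<pK P. Tv x (k+1) \<le> pTmax P) \<and>
     (\<forall>n\<in>{1..pN P}. \<forall>k<pK P. shat P n (k+1) \<le> sv x n (k+1) \<and> sv x n (k+1) \<le> 1) \<and>
     (\<forall>n\<in>{1..pN P}. \<forall>k<pK P. 0 \<le> iv x n k \<and> iv x n k \<le> pimax P n) \<and>
     Tv x 0 = pTmeas P \<and>
     (\<forall>n\<in>{1..pN P}. sv x n 0 = psmeas P n)"

definition lagrangian :: "evprob \<Rightarrow> evmult \<Rightarrow> evsol \<Rightarrow> real" where
  "lagrangian P m x =
     cost P x
   + (\<Sum>k<pK P. lamT m k * (Tv x (k+1) - ptau P * Tv x k - pgam P * ev x k - prho P * pTa P k))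
   + (\<Sum>k<pK P. muE m k * ((itv x k)^2 - ev x k))
   + (\<Sum>n\<in>{1..pN P}. \<Sum>k<pK P. lamS m n k * (sv x n (k+1) - sv x n k - peta P n * iv x n k))
   + (\<Sum>k<pK P. lamI m k * (itv x k - pid P k - (\<Sum>n\<in>{1..pN P}. iv x n k)))
   + (\<Sum>k<pK P. muT m (k+1) * (Tv x (k+1) - pTmax P))
   + (\<Sum>n\<in>{1..pN P}. \<Sum>k<pK P. muSlo m n k * (shat P n (k+1) - sv x n (k+1)))
   + (\<Sum>n\<in>{1..pN P}. \<Sum>k<pK P. muShi m n k * (sv x n (k+1) - 1))
   + (\<Sum>n\<in>{1..pN P}. \<Sum>k<pK P. muIlo m n k * (- iv x n k))
   + (\<Sum>n\<in>{1..pN P}. \<Sum>k<pK P. muIhi m n k * (iv x n k - pimax P n))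
   + lamT0 m * (Tv x 0 - pTmeas P)
   + (\<Sum>n\<in>{1..pN P}. lamS0 m n * (sv x n 0 - psmeas P n))"

definition sol_step :: "evsol \<Rightarrow> real \<Rightarrow> evsol \<Rightarrow> evsol" where
  "sol_step x t d =
     \<lparr>Tv = (\<lambda>k. Tv x k + t * Tv d k), ev = (\<lambda>k. ev x k + t * ev d k),
      sv = (\<lambda>n k. sv x n k + t * sv d n k), iv = (\<lambda>n k. iv x n k + t * iv d n k),
      itv = (\<lambda>k. itv x k + t * itv d k)\<rparr>"

text \<open>KKT conditions: m is a vector of Lagrange multipliers associated with x:
  dual feasibility, complementary slackness, and stationarity of the Lagrangian
  (all directional derivatives of L(., m) at x vanish, i.e. grad_x L = 0).\<close>
definition lagrange_multipliers :: "evprob \<Rightarrow> evmult \<Rightarrow> evsol \<Rightarrow> bool" where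
  "lagrange_multipliers P m x \<longleftrightarrow>
     (\<forall>k<pK P. muE m k \<ge> 0 \<and> muE m k * ((itv x k)^2 - ev x k) = 0) \<and>
     (\<forall>k<pK P. muT m (k+1) \<ge> 0 \<and> muT m (k+1) * (Tv x (k+1) - pTmax P) = 0) \<and>
     (\<forall>n\<in>{1..pN P}. \<forall>k<pK P.
        muSlo m n k \<ge> 0 \<and> muSlo m n k * (shat P n (k+1) - sv x n (k+1)) = 0 \<and>
        muShi m n k \<ge> 0 \<and> muShi m n k * (sv x n (k+1) - 1) = 0 \<and>
        muIlo m n k \<ge> 0 \<and> muIlo m n k * (- iv x n k) = 0 \<and>
        muIhi m n k \<ge> 0 \<and> muIhi m n k * (iv x n k - pimax P n) = 0) \<and>
     (\<forall>d. ((\<lambda>t. lagrangian P m (sol_step x t d)) has_real_derivative 0) (at 0))"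

end

theory Submission imports Defs begin

text \<open>Write \<open>\<lambda>\<^sub>k = - lamT m k\<close> for the (sign-flipped) multiplier of the temperature dynamics.
  Stationarity of the Lagrangian in the direction \<open>e(k)\<close> gives \<open>\<mu>\<^sub>e\<^sup>k = \<gamma> \<lambda>\<^sub>k\<close>, and in the
  direction \<open>T(k+1)\<close> the backward recursion \<open>\<lambda>\<^sub>k = \<tau> \<lambda>\<^sub>k\<^sub>+\<^sub>1 + \<mu>\<^sub>T\<^sup>k\<^sup>+\<^sup>1\<close> with \<open>\<lambda>\<^sub>K = 0\<close>.
  As \<open>\<tau>, \<gamma> > 0\<close> and \<open>\<mu>\<^sub>T \<ge> 0\<close>, unrolling shows that \<open>\<mu>\<^sub>e\<^sup>k > 0\<close> exactly when \<open>\<mu>\<^sub>T\<^sup>j > 0\<close>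
  for some \<open>j \<in> (k, K]\<close>; the last positive indices of the two sequences therefore differ by one.\<close>

definition e_unit :: "nat \<Rightarrow> evsol" where
  "e_unit k = \<lparr>Tv = (\<lambda>_. 0), ev = (\<lambda>j. of_bool (j = k)), sv = (\<lambda>_ _. 0),
     iv = (\<lambda>_ _. 0), itv = (\<lambda>_. 0)\<rparr>"

definition T_unit :: "nat \<Rightarrow> evsol" where
  "T_unit k = \<lparr>Tv = (\<lambda>j. of_bool (j = k)), ev = (\<lambda>_. 0), sv = (\<lambda>_ _. 0),
     iv = (\<lambda>_ _. 0), itv = (\<lambda>_. 0)\<rparr>"

lemma lagrangian_e_unit_deriv:
  assumes "k < pK P"
  shows "((\<lambda>t. lagrangian P m (sol_step x t (e_unit k))) has_real_derivative
           - pgam P * lamT m k - muE m k) (at 0)"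
  unfolding lagrangian_def cost_def sol_step_def e_unit_def
  using assms
  by (auto intro!: derivative_eq_intros simp: sum.distrib sum_negf mult.assoc sum_subtractf)

lemma lagrangian_T_unit_deriv:
  assumes "k < pK P"
  shows "((\<lambda>t. lagrangian P m (sol_step x t (T_unit (Suc k)))) has_real_derivative
           lamT m k - (if Suc k < pK P then ptau P * lamT m (Suc k) else 0) + muT m (Suc k)) (at 0)"
  unfolding lagrangian_def cost_def sol_step_def T_unit_def
  using assms
  by (auto intro!: derivative_eq_intros
      simp: sum.distrib sum_negf mult.assoc sum_subtractf left_diff_distrib)

lemma lagrange_multipliers_deriv_zero:
  "lagrange_multipliers P m x \<Longrightarrow>
   ((\<lambda>t. lagrangian P m (sol_step x t d)) has_real_derivative 0) (at 0)"
  unfolding lagrange_multipliers_def by blast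

lemma lagrange_multipliers_muE_eq:
  assumes "lagrange_multipliers P m x" and "k < pK P"
  shows "muE m k = - pgam P * lamT m k"
  using DERIV_unique[OF lagrange_multipliers_deriv_zero[OF assms(1)]
      lagrangian_e_unit_deriv[OF assms(2)]]
  by simp

lemma lagrange_multipliers_lamT_rec:
  assumes "lagrange_multipliers P m x" and "k < pK P"
  shows "- lamT m k = (if Suc k < pK P then ptau P * - lamT m (Suc k) else 0) + muT m (Suc k)"
  using DERIV_unique[OF lagrange_multipliers_deriv_zero[OF assms(1)]
      lagrangian_T_unit_deriv[OF assms(2)]]
  by (cases "Suc k < pK P") auto

lemma backward_recursion_pos_iff:
  fixes L \<mu> :: "nat \<Rightarrow> real"
  assumes "\<tau> > 0" and "L K = 0"
    and \<mu>_nonneg: "\<And>k. k < K \<Longrightarrow> \<mu> (Suc k) \<ge> 0"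
    and rec: "\<And>k. k < K \<Longrightarrow> L k = \<tau> * L (Suc k) + \<mu> (Suc k)"
    and "k \<le> K"
  shows "L k \<ge> 0 \<and> (L k > 0 \<longleftrightarrow> (\<exists>j\<in>{k<..K}. \<mu> j > 0))"
  using \<open>k \<le> K\<close>
proof (induction k rule: inc_induct)
  case base
  then show ?case using \<open>L K = 0\<close> by simp
next
  case (step k)
  have "L k = \<tau> * L (Suc k) + \<mu> (Suc k)" and "\<mu> (Suc k) \<ge> 0"
    using rec \<mu>_nonneg step.hyps by auto
  moreover have "\<tau> * L (Suc k) \<ge> 0" and "\<tau> * L (Suc k) > 0 \<longleftrightarrow> L (Suc k) > 0"
    using step.IH \<open>\<tau> > 0\<close> by (simp_all add: zero_less_mult_iff)
  moreover have "{k<..K} = insert (Suc k) {Suc k<..K}"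
    using step.hyps by auto
  ultimately show ?case
    using step.IH by auto
qed

lemma last_positive_shift:
  fixes E M :: "nat \<Rightarrow> real"
  assumes E_pos: "\<And>k. k < K \<Longrightarrow> E k > 0 \<longleftrightarrow> (\<exists>j\<in>{k<..K}. M j > 0)" and "k < K"
  shows "(M (k+1) > 0 \<and> (\<forall>j. k+1 < j \<and> j \<le> K \<longrightarrow> \<not> M j > 0))
     \<longleftrightarrow> (E k > 0 \<and> (\<forall>j. k < j \<and> j < K \<longrightarrow> \<not> E j > 0))"
proof -
  have M_pos_beyond_succ: "Suc k < K \<and> E (Suc k) > 0" if "Suc k < j" "j \<le> K" "M j > 0" for j
    using that E_pos[of "Suc k"] by auto
  show ?thesis
  proof
    assume "M (k+1) > 0 \<and> (\<forall>j. k+1 < j \<and> j \<le> K \<longrightarrow> \<not> M j > 0)"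
    then show "E k > 0 \<and> (\<forall>j. k < j \<and> j < K \<longrightarrow> \<not> E j > 0)"
      using E_pos \<open>k < K\<close> by (auto 0 4)
  next
    assume "E k > 0 \<and> (\<forall>j. k < j \<and> j < K \<longrightarrow> \<not> E j > 0)"
    then show "M (k+1) > 0 \<and> (\<forall>j. k+1 < j \<and> j \<le> K \<longrightarrow> \<not> M j > 0)"
      using E_pos \<open>k < K\<close> M_pos_beyond_succ
      by (metis Suc_eq_plus1 Suc_lessI greaterThanAtMost_iff lessI)
  qed
qed

theorem corollary1:
  fixes P :: evprob and x :: evsol and m :: evmult and b dt :: real
  assumes "b > 0" and "dt > 0"
    and "ptau P = exp (- b * dt)" and "prho P = 1 - ptau P"
    and "pgam P > 0"
    and "\<forall>k. pid P k \<ge> 0"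
    and "\<forall>n\<in>{1..pN P}. pq P n > 0 \<and> pr P n \<ge> 0 \<and> peta P n > 0 \<and> pimax P n > 0"
    and "\<forall>n\<in>{1..pN P}. 0 \<le> psbar P n \<and> psbar P n \<le> 1 \<and> pkbar P n \<le> pK P"
    and "feasible P x"
    and "\<forall>y. feasible P y \<longrightarrow> cost P x \<le> cost P y"
    and "lagrange_multipliers P m x"
  shows "\<forall>k<pK P.
           (muT m (k+1) > 0 \<and> (\<forall>j. k+1 < j \<and> j \<le> pK P \<longrightarrow> \<not> muT m j > 0))
           \<longleftrightarrow> (muE m k > 0 \<and> (\<forall>j. k < j \<and> j < pK P \<longrightarrow> \<not> muE m j > 0))"
proof -
  note kkt = \<open>lagrange_multipliers P m x\<close>
  define L where "L k = (if k < pK P then - lamT m k else 0)" for k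
  have L_end: "L (pK P) = 0"
    by (simp add: L_def)
  have tau_pos: "ptau P > 0"
    using \<open>ptau P = exp (- b * dt)\<close> by simp
  have muT_nonneg: "muT m (Suc k) \<ge> 0" if "k < pK P" for k
    using kkt that unfolding lagrange_multipliers_def by simp
  have L_rec: "L k = ptau P * L (Suc k) + muT m (Suc k)" if "k < pK P" for k
    using lagrange_multipliers_lamT_rec[OF kkt that] that unfolding L_def by simp
  have muE_pos: "muE m k > 0 \<longleftrightarrow> (\<exists>j\<in>{k<..pK P}. muT m j > 0)" if "k < pK P" for k
  proof -
    have "muE m k = pgam P * L k"
      using lagrange_multipliers_muE_eq[OF kkt that] that unfolding L_def by simp
    then show ?thesis
      using backward_recursion_pos_iff[OF tau_pos L_end muT_nonneg L_rec, of k]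
        \<open>pgam P > 0\<close> that
      by (simp add: zero_less_mult_iff)
  qed
  show ?thesis
    using last_positive_shift[OF muE_pos] by blast
qed

end
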